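(* Let $s=(s_1,\dots,s_m)$ be a sequence of positive integers and let $L=\mathrm{Av}_s(212)$ be the set of Stirling $s$-words. Algorithm B, started from $1^{s_1}2^{s_2}\cdots m^{s_m}$, visits every word of $L$ exactly once and then halts, and any two consecutively visited words differ by a bump of distance $1$ (i.e., a run of some value is moved past exactly one smaller letter, which is a transposition of two entries).
   Context: For a sequence $s=(s_1,\dots,s_m)$ of positive integers, an $s$-word is a word $w=w_1\cdots w_n$ ($n=s_1+\dots+s_m$) with exactly $s_i$ copies of $i$ for each $i\in[m]$; $S_s$ is the set of $s$-words. A word $w$ contains the pattern $212$ if there are indices $i<j<k$ with $w_i=w_k>w_j$; $\mathrm{Av}_s(212)$ is the set of $s$-words not containing $212$. The rank of a position $i$ of $w$ is the position of $(w_i,i)$ when all pairs $(w_k,k)$ are ordered by increasing value, ties broken by increasing index. The right-run at index $i$ is $w_i\cdots w_j$ with $w_i=\dots=w_j$ and $j=n$ or $w_j\ne w_{j+1}$; the left-run at index $i$ is $w_j\cdots w_i$ with $w_j=\dots=w_i$ and $j=1$ or $w_{j-1}\ne w_j$. A right-bump at index $i$ with distance $d\ge1$ moves the right-run at index $i$ to the right past the $d$ letters immediately to its right, all of which must be smaller than the run's value; a left-bump is symmetric using the left-run and the $d$ letters immediately to its left. The bump's rank is the rank of index $i$. For $w\in L$, a bump of given rank and direction is minimal if its distance is positive and smallest among such bumps producing a word in $L$. Algorithm B: visit $1^{s_1}\cdots m^{s_m}$; then repeatedly, from the last visited word, among minimal bumps whose result has not yet been visited choose the one of largest rank, preferring right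 over left for equal rank, apply it and visit the result; halt when no such bump exists. *)

theory Defs
  imports Main
begin

text \<open>Words are lists of naturals; positions are 0-based (position k here is position k+1
in the paper).  A direction is a bool: True = right, False = left.\<close>

definition swords :: "nat list \<Rightarrow> nat list set" where
  "swords s = {w. set w \<subseteq> {1..length s} \<and> (\<forall>i<length s. count_list w (i+1) = s!i)}"

definition contains212 :: "nat list \<Rightarrow> bool" where
  "contains212 w \<longleftrightarrow> (\<exists>i j k. i < j \<and> j < k \<and> k < length w \<and> w!i = w!k \<and> w!k > w!j)"

definition Av212 :: "nat list \<Rightarrow> nat list set" where
  "Av212 s = {w \<in> swords s. \<not> contains212 w}"

definition start_word :: "nat list \<Rightarrow> nat list" where
  "start_word s = concat (map (\<lambda>i. replicate (s!i) (i+1)) [0..<length s])"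

definition rank :: "nat list \<Rightarrow> nat \<Rightarrow> nat" where
  "rank w i = card {k. k < length w \<and> (w!k < w!i \<or> (w!k = w!i \<and> k < i))} + 1"

definition rrun_end :: "nat list \<Rightarrow> nat \<Rightarrow> nat" where
  "rrun_end w i = i + length (takeWhile (\<lambda>x. x = w!i) (drop i w))"

definition lrun_start :: "nat list \<Rightarrow> nat \<Rightarrow> nat" where
  "lrun_start w i = Suc i - length (takeWhile (\<lambda>x. x = w!i) (rev (take (Suc i) w)))"

definition bump :: "nat list \<Rightarrow> nat \<Rightarrow> bool \<Rightarrow> nat \<Rightarrow> nat list option" where
  "bump w i right d =
    (if right then
       (let e = rrun_end w i in
        if i < length w \<and> 1 \<le> d \<and> e + d \<le> length w \<and> (\<forall>t\<in>{e..<e+d}. w!t < w!i)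
        then Some (take i w @ take d (drop e w) @ take (e - i) (drop i w) @ drop (e + d) w)
        else None)
     else
       (let b = lrun_start w i in
        if i < length w \<and> 1 \<le> d \<and> d \<le> b \<and> (\<forall>t\<in>{b-d..<b}. w!t < w!i)
        then Some (take (b - d) w @ take (Suc i - b) (drop b w) @ take d (drop (b - d) w)
                   @ drop (Suc i) w)
        else None))"

definition bump_into :: "nat list set \<Rightarrow> nat list \<Rightarrow> nat \<Rightarrow> bool \<Rightarrow> nat \<Rightarrow> bool" where
  "bump_into L w i right d \<longleftrightarrow> (\<exists>v. bump w i right d = Some v \<and> v \<in> L)"

definition minbump :: "nat list set \<Rightarrow> nat list \<Rightarrow> nat \<Rightarrow> bool \<Rightarrow> nat list option" where
  "minbump L w i right =
    (if \<exists>d. bump_into L w i right d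
     then bump w i right (LEAST d. bump_into L w i right d) else None)"

text \<open>Priority key: larger rank first, right preferred over left at equal rank.\<close>
definition bkey :: "nat list \<Rightarrow> nat \<times> bool \<Rightarrow> nat" where
  "bkey w c = 2 * rank w (fst c) + (if snd c then 1 else 0)"

definition algB_step :: "nat list set \<Rightarrow> nat list list \<Rightarrow> nat list option" where
  "algB_step L vis =
    (let w = last vis;
         C = {(i, r). i < length w \<and> (\<exists>v. minbump L w i r = Some v \<and> v \<notin> set vis)}
     in if C = {} then None
        else (let c = (THE c. c \<in> C \<and> (\<forall>c'\<in>C. bkey w c' \<le> bkey w c))
              in minbump L w (fst c) (snd c)))"

fun algB_run :: "nat list set \<Rightarrow> nat list \<Rightarrow> nat \<Rightarrow> nat list list" where
  "algB_run L w0 0 = [w0]"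
| "algB_run L w0 (Suc k) =
     (case algB_step L (algB_run L w0 k) of None \<Rightarrow> algB_run L w0 k
      | Some v \<Rightarrow> algB_run L w0 k @ [v])"

end

theory Submission
  imports Defs
begin

text \<open>
  In a 212-avoiding word the copies of a largest letter \<open>m\<close>
  are contiguous (\<open>m x m\<close> with \<open>x < m\<close> is a 212), so the words of \<open>Av212 (s @ [a])\<close> are
  exactly the words of \<open>Av212 s\<close> with a block of \<open>a\<close> copies of the new letter inserted at
  some position. If \<open>T\<close> lists \<open>Av212 s\<close> in the order visited by Algorithm B, the new list
  sweeps the block through \<open>T ! 0\<close> from right to left, through \<open>T ! 1\<close> from left to right,
  and so on. Inside a sweep the block letters have the largest ranks and the only bump of the
  block to an unvisited word moves it by one place, so Algorithm B follows the sweep. At the end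
  of a sweep every position of the block has been visited, and the bumps of the other letters,
  with their ranks, are those of \<open>T ! j\<close>; so Algorithm B makes the step from \<open>T ! j\<close> to
  \<open>T ! Suc j\<close>, lifted by the block, which is a bump of distance 1.
\<close>

section \<open>Runs and bumps\<close>

lemma takeWhile_eq_replicate_append:
  "takeWhile (\<lambda>x. x = c) (replicate k c @ B) = replicate k c @ takeWhile (\<lambda>x. x = c) B"
  by (induction k) auto

lemma rrun_end_in_block:
  assumes "j < k" "B = [] \<or> hd B \<noteq> c"
  shows "rrun_end (A @ replicate k c @ B) (length A + j) = length A + k"
  using assms
  by (simp add: rrun_end_def nth_append takeWhile_eq_replicate_append takeWhile_eq_Nil_iff)

lemma lrun_start_in_block:
  assumes "j < k" "A = [] \<or> last A \<noteq> c"
  shows "lrun_start (A @ replicate k c @ B) (length A + j) = length A"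
proof -
  have "rev (take (Suc (length A + j)) (A @ replicate k c @ B)) = replicate (Suc j) c @ rev A"
    using assms(1) by (simp add: min_def replicate_append_same)
  moreover have "takeWhile (\<lambda>x. x = c) (rev A) = []"
    using assms(2) by (simp add: takeWhile_eq_Nil_iff hd_rev)
  ultimately show ?thesis
    using assms(1) by (simp add: lrun_start_def nth_append takeWhile_eq_replicate_append)
qed

lemma ball_nth_append_take:
  assumes "d \<le> length B"
  shows "(\<forall>t\<in>{length A..<length A + d}. P ((A @ B) ! t)) \<longleftrightarrow> (\<forall>x\<in>set (take d B). P x)"
proof -
  have "(\<forall>t\<in>{length A..<length A + d}. P ((A @ B) ! t)) \<longleftrightarrow> (\<forall>i<d. P (B ! i))"
    by (auto simp: nth_append dest: bspec[of _ _ "length A + _"])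
  also have "\<dots> \<longleftrightarrow> (\<forall>x\<in>set (take d B). P x)"
    using assms by (auto simp: set_conv_nth)
  finally show ?thesis .
qed

lemma ball_nth_append_drop:
  assumes "d \<le> length A"
  shows "(\<forall>t\<in>{length A - d..<length A}. P ((A @ B) ! t)) \<longleftrightarrow> (\<forall>x\<in>set (drop (length A - d) A). P x)"
proof -
  have "(\<forall>t\<in>{length A - d..<length A}. P ((A @ B) ! t)) \<longleftrightarrow> (\<forall>i<d. P (A ! (length A - d + i)))"
  proof
    assume h: "\<forall>t\<in>{length A - d..<length A}. P ((A @ B) ! t)"
    show "\<forall>i<d. P (A ! (length A - d + i))"
    proof (intro allI impI)
      fix i assume "i < d"
      then have "length A - d + i \<in> {length A - d..<length A}" using assms by auto
      then show "P (A ! (length A - d + i))" using h by (auto simp: nth_append)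
    qed
  next
    assume h: "\<forall>i<d. P (A ! (length A - d + i))"
    show "\<forall>t\<in>{length A - d..<length A}. P ((A @ B) ! t)"
    proof
      fix t assume t: "t \<in> {length A - d..<length A}"
      then have "t - (length A - d) < d" and "length A - d + (t - (length A - d)) = t" by auto
      then show "P ((A @ B) ! t)" using h t by (metis atLeastLessThan_iff nth_append)
    qed
  qed
  also have "\<dots> \<longleftrightarrow> (\<forall>x\<in>set (drop (length A - d) A). P x)"
    using assms by (auto simp: set_conv_nth)
  finally show ?thesis .
qed

lemma bump_right_in_block:
  assumes "j < k" "B = [] \<or> hd B \<noteq> c"
  shows "bump (A @ replicate k c @ B) (length A + j) True d =
    (if 1 \<le> d \<and> d \<le> length B \<and> (\<forall>x\<in>set (take d B). x < c)
     then Some (A @ replicate j c @ take d B @ replicate (k - j) c @ drop d B) else None)"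
proof -
  let ?w = "A @ replicate k c @ B"
  have c: "?w ! (length A + j) = c" using assms(1) by (simp add: nth_append)
  have cond: "(\<forall>t\<in>{length A + k..<length A + k + d}. ?w ! t < c) \<longleftrightarrow> (\<forall>x\<in>set (take d B). x < c)"
    if "d \<le> length B"
    using ball_nth_append_take[OF that, of "A @ replicate k c" "\<lambda>x. x < c"] by simp
  have "take (length A + j) ?w @ take d (drop (length A + k) ?w)
      @ take (length A + k - (length A + j)) (drop (length A + j) ?w) @ drop (length A + k + d) ?w
      = A @ replicate j c @ take d B @ replicate (k - j) c @ drop d B"
    using assms(1) by (simp add: min_def)
  then show ?thesis
    unfolding bump_def Let_def rrun_end_in_block[OF assms] c using assms(1) cond by auto
qed

lemma bump_left_in_block:
  assumes "j < k" "A = [] \<or> last A \<noteq> c"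
  shows "bump (A @ replicate k c @ B) (length A + j) False d =
    (if 1 \<le> d \<and> d \<le> length A \<and> (\<forall>x\<in>set (drop (length A - d) A). x < c)
     then Some (take (length A - d) A @ replicate (Suc j) c @ drop (length A - d) A
                @ replicate (k - Suc j) c @ B)
     else None)"
proof -
  let ?w = "A @ replicate k c @ B"
  have c: "?w ! (length A + j) = c" using assms(1) by (simp add: nth_append)
  have cond: "(\<forall>t\<in>{length A - d..<length A}. ?w ! t < c) \<longleftrightarrow> (\<forall>x\<in>set (drop (length A - d) A). x < c)"
    if "d \<le> length A"
    using ball_nth_append_drop[OF that, of "\<lambda>x. x < c"] by simp
  have "take (length A - d) ?w @ take (Suc (length A + j) - length A) (drop (length A) ?w)
      @ take d (drop (length A - d) ?w) @ drop (Suc (length A + j)) ?w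
      = take (length A - d) A @ replicate (Suc j) c @ drop (length A - d) A @ replicate (k - Suc j) c @ B"
    if "d \<le> length A"
    using assms(1) that by (simp add: min_def)
  then show ?thesis
    unfolding bump_def Let_def lrun_start_in_block[OF assms] c using assms(1) cond by auto
qed

lemma rrun_end_bounds:
  assumes "i < length u"
  shows "i < rrun_end u i" "rrun_end u i \<le> length u"
proof -
  have "drop i u = u ! i # drop (Suc i) u" using assms by (simp add: Cons_nth_drop_Suc)
  moreover have "length (takeWhile (\<lambda>x. x = u ! i) (drop i u)) \<le> length (drop i u)"
    by (rule length_takeWhile_le)
  ultimately show "i < rrun_end u i" "rrun_end u i \<le> length u"
    using assms by (simp_all add: rrun_end_def)
qed

lemma lrun_start_le:
  assumes "i < length u"
  shows "lrun_start u i \<le> i"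
  using assms by (simp add: lrun_start_def take_Suc_conv_app_nth)

lemma bump_SomeD:
  assumes "bump u i r d = Some v"
  shows "length v = length u" "i < length u" "1 \<le> d"
proof -
  have "length v = length u \<and> i < length u \<and> 1 \<le> d"
  proof (cases r)
    case True
    with assms show ?thesis
      using rrun_end_bounds[of i u] by (auto simp: bump_def Let_def min_def split: if_splits)
  next
    case False
    with assms show ?thesis
      using lrun_start_le[of i u] by (auto simp: bump_def Let_def min_def split: if_splits)
  qed
  then show "length v = length u" "i < length u" "1 \<le> d" by simp_all
qed

lemma rrun_end_prefix: "rrun_end (P @ u) (length P + i) = length P + rrun_end u i"
  by (simp add: rrun_end_def nth_append)

lemma rrun_end_suffix:
  assumes "i < length u" "Q = [] \<or> hd Q \<noteq> u ! i"
  shows "rrun_end (u @ Q) i = rrun_end u i"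
proof -
  have "takeWhile (\<lambda>x. x = u ! i) Q = []" using assms(2) by (simp add: takeWhile_eq_Nil_iff)
  then show ?thesis
    using assms(1)
    by (simp add: rrun_end_def nth_append takeWhile_append takeWhile_eq_all_conv[THEN iffD2])
qed

lemma lrun_start_prefix:
  assumes "i < length u" "P = [] \<or> last P \<noteq> u ! i"
  shows "lrun_start (P @ u) (length P + i) = length P + lrun_start u i"
proof -
  let ?X = "rev (take (Suc i) u)"
  have "takeWhile (\<lambda>x. x = u ! i) (rev P) = []"
    using assms(2) by (simp add: takeWhile_eq_Nil_iff hd_rev)
  moreover have "length (takeWhile (\<lambda>x. x = u ! i) ?X) \<le> Suc i"
    using length_takeWhile_le[of _ ?X] assms(1) by simp
  ultimately show ?thesis
    using assms(1)
    by (auto simp: lrun_start_def nth_append takeWhile_append takeWhile_eq_all_conv[THEN iffD2])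
qed

lemma lrun_start_suffix:
  assumes "i < length u"
  shows "lrun_start (u @ Q) i = lrun_start u i"
  using assms by (simp add: lrun_start_def nth_append)

lemma ball_nth_append_shift:
  "(\<forall>t\<in>{length P + x..<length P + y}. f ((P @ u) ! t)) \<longleftrightarrow> (\<forall>t\<in>{x..<y}. f (u ! t))"
proof
  assume h: "\<forall>t\<in>{length P + x..<length P + y}. f ((P @ u) ! t)"
  show "\<forall>t\<in>{x..<y}. f (u ! t)"
    using h[rule_format, of "length P + _"] by (simp add: nth_append)
next
  assume h: "\<forall>t\<in>{x..<y}. f (u ! t)"
  show "\<forall>t\<in>{length P + x..<length P + y}. f ((P @ u) ! t)"
  proof
    fix t assume t: "t \<in> {length P + x..<length P + y}"
    then have "t - length P \<in> {x..<y}" by auto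
    then show "f ((P @ u) ! t)" using h t by (simp add: nth_append)
  qed
qed

lemma bump_right_larger_prefix:
  assumes "i < length u" "\<forall>x\<in>set P. u ! i < x"
  shows "bump (P @ u) (length P + i) True d = map_option ((@) P) (bump u i True d)"
proof -
  let ?e = "rrun_end u i"
  have "(\<forall>t\<in>{length P + ?e..<length P + ?e + d}. (P @ u) ! t < u ! i)
      \<longleftrightarrow> (\<forall>t\<in>{?e..<?e + d}. u ! t < u ! i)"
    using ball_nth_append_shift[of P ?e "?e + d" "\<lambda>x. x < u ! i" u] by (simp add: add.assoc)
  then show ?thesis
    using assms(1) by (simp add: bump_def Let_def rrun_end_prefix nth_append add.assoc)
qed

lemma bump_left_larger_prefix:
  assumes "i < length u" "\<forall>x\<in>set P. u ! i < x"
  shows "bump (P @ u) (length P + i) False d = map_option ((@) P) (bump u i False d)"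
proof -
  let ?b = "lrun_start u i"
  have "P = [] \<or> last P \<noteq> u ! i" using assms(2) by (cases P rule: rev_cases) auto
  then have b: "lrun_start (P @ u) (length P + i) = length P + ?b"
    using lrun_start_prefix assms(1) by blast
  have cond: "(d \<le> length P + ?b \<and> (\<forall>t\<in>{length P + ?b - d..<length P + ?b}. (P @ u) ! t < u ! i))
     \<longleftrightarrow> (d \<le> ?b \<and> (\<forall>t\<in>{?b - d..<?b}. u ! t < u ! i))"
  proof (cases "d \<le> ?b")
    case True
    then have "length P + ?b - d = length P + (?b - d)" by simp
    then show ?thesis using True ball_nth_append_shift[of P "?b - d" ?b "\<lambda>x. x < u ! i" u] by simp
  next
    case False
    have "\<not> (\<forall>t\<in>{length P + ?b - d..<length P + ?b}. (P @ u) ! t < u ! i)"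
      if "d \<le> length P + ?b"
    proof -
      have P: "P \<noteq> []" and t: "length P - 1 \<in> {length P + ?b - d..<length P + ?b}"
        using False that by auto
      have "\<not> (P @ u) ! (length P - 1) < u ! i"
        using bspec[OF assms(2) last_in_set[OF P]] P by (simp add: nth_append last_conv_nth)
      with t show ?thesis by blast
    qed
    then show ?thesis using False by blast
  qed
  have "take (length P + ?b - d) (P @ u) @ take (Suc (length P + i) - (length P + ?b)) (drop (length P + ?b) (P @ u))
      @ take d (drop (length P + ?b - d) (P @ u)) @ drop (Suc (length P + i)) (P @ u)
      = P @ (take (?b - d) u @ take (Suc i - ?b) (drop ?b u) @ take d (drop (?b - d) u) @ drop (Suc i) u)"
    if "d \<le> ?b"
    using that lrun_start_le[OF assms(1)] by (simp add: add_diff_assoc)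
  then show ?thesis
    unfolding bump_def Let_def b using assms(1) cond by (auto simp: nth_append)
qed

lemma bump_larger_prefix:
  assumes "i < length u" "\<forall>x\<in>set P. u ! i < x"
  shows "bump (P @ u) (length P + i) r d = map_option ((@) P) (bump u i r d)"
  using bump_right_larger_prefix[OF assms] bump_left_larger_prefix[OF assms] by (cases r) simp_all

lemma bump_right_larger_suffix:
  assumes "i < length u" "\<forall>x\<in>set Q. u ! i < x"
  shows "bump (u @ Q) i True d = map_option (\<lambda>v. v @ Q) (bump u i True d)"
proof -
  let ?e = "rrun_end u i"
  have "Q = [] \<or> hd Q \<noteq> u ! i" using assms(2) by (cases Q) auto
  then have e: "rrun_end (u @ Q) i = ?e" using rrun_end_suffix assms(1) by blast
  have bounds: "i < ?e" "?e \<le> length u" using rrun_end_bounds[OF assms(1)] by simp_all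
  have cond: "(?e + d \<le> length (u @ Q) \<and> (\<forall>t\<in>{?e..<?e + d}. (u @ Q) ! t < u ! i))
     \<longleftrightarrow> (?e + d \<le> length u \<and> (\<forall>t\<in>{?e..<?e + d}. u ! t < u ! i))"
  proof (cases "?e + d \<le> length u")
    case True
    then show ?thesis by (auto simp: nth_append)
  next
    case False
    have "\<not> (\<forall>t\<in>{?e..<?e + d}. (u @ Q) ! t < u ! i)" if "?e + d \<le> length (u @ Q)"
    proof -
      have Q: "Q \<noteq> []" and t: "length u \<in> {?e..<?e + d}" using False bounds that by auto
      have "\<not> (u @ Q) ! length u < u ! i"
        using bspec[OF assms(2) hd_in_set[OF Q]] Q by (simp add: nth_append hd_conv_nth)
      with t show ?thesis by blast
    qed
    then show ?thesis using False by blast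
  qed
  show ?thesis
    unfolding bump_def Let_def e using assms(1) cond bounds by (auto simp: nth_append)
qed

lemma bump_left_larger_suffix:
  assumes "i < length u" "\<forall>x\<in>set Q. u ! i < x"
  shows "bump (u @ Q) i False d = map_option (\<lambda>v. v @ Q) (bump u i False d)"
proof -
  let ?b = "lrun_start u i"
  have "?b \<le> i" using lrun_start_le assms(1) by blast
  then show ?thesis
    using assms(1) by (auto simp: bump_def Let_def lrun_start_suffix nth_append)
qed

lemma bump_larger_suffix:
  assumes "i < length u" "\<forall>x\<in>set Q. u ! i < x"
  shows "bump (u @ Q) i r d = map_option (\<lambda>v. v @ Q) (bump u i r d)"
  using bump_right_larger_suffix[OF assms] bump_left_larger_suffix[OF assms] by (cases r) simp_all

section \<open>Ranks\<close>

definition lower_positions :: "nat list \<Rightarrow> nat \<Rightarrow> nat set" where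
  "lower_positions w i = {k. k < length w \<and> (w ! k < w ! i \<or> (w ! k = w ! i \<and> k < i))}"

lemma rank_eq_card_lower_positions: "rank w i = card (lower_positions w i) + 1"
  by (simp add: rank_def lower_positions_def)

lemma rank_less:
  assumes "i < length w" "w ! i < w ! j \<or> (w ! i = w ! j \<and> i < j)"
  shows "rank w i < rank w j"
proof -
  have "lower_positions w i \<subset> lower_positions w j" using assms by (auto simp: lower_positions_def)
  then show ?thesis
    unfolding rank_eq_card_lower_positions by (simp add: psubset_card_mono lower_positions_def)
qed

lemma rank_inj:
  assumes "i < length w" "j < length w" "rank w i = rank w j"
  shows "i = j"
  using rank_less[of i w j] rank_less[of j w i] assms by (metis less_irrefl linorder_neqE)

lemma bkey_inj:
  assumes "fst c < length w" "fst c' < length w" "bkey w c = bkey w c'"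
  shows "c = c'"
proof -
  have "snd c = snd c' \<and> rank w (fst c) = rank w (fst c')"
    using assms(3) unfolding bkey_def by (cases "snd c"; cases "snd c'") presburger+
  then show ?thesis using rank_inj[OF assms(1,2)] by (simp add: prod_eq_iff)
qed

lemma rank_larger_prefix:
  assumes "i < length u" "\<forall>x\<in>set P. u ! i < x"
  shows "rank (P @ u) (length P + i) = rank u i"
proof -
  have "lower_positions (P @ u) (length P + i) = (+) (length P) ` lower_positions u i"
  proof (intro set_eqI iffI)
    fix k assume k: "k \<in> lower_positions (P @ u) (length P + i)"
    have "length P \<le> k"
    proof (rule ccontr)
      assume "\<not> length P \<le> k"
      then have "u ! i < (P @ u) ! k" using assms(2) nth_mem[of k P] by (simp add: nth_append)
      then show False using k by (auto simp: lower_positions_def)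
    qed
    then show "k \<in> (+) (length P) ` lower_positions u i"
      using k by (auto simp: lower_positions_def nth_append image_iff intro!: exI[of _ "k - length P"])
  qed (auto simp: lower_positions_def nth_append)
  then show ?thesis unfolding rank_eq_card_lower_positions by (simp add: card_image)
qed

lemma rank_larger_suffix:
  assumes "i < length u" "\<forall>x\<in>set Q. u ! i < x"
  shows "rank (u @ Q) i = rank u i"
proof -
  have "lower_positions (u @ Q) i = lower_positions u i"
  proof (intro set_eqI iffI)
    fix k assume k: "k \<in> lower_positions (u @ Q) i"
    have "k < length u"
    proof (rule ccontr)
      assume "\<not> k < length u"
      moreover have "k - length u < length Q" using k calculation by (auto simp: lower_positions_def)
      ultimately have "(u @ Q) ! k \<in> set Q" by (simp add: nth_append)
      then have "u ! i < (u @ Q) ! k" using assms(2) by blast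
      then show False using k assms(1) by (auto simp: lower_positions_def nth_append)
    qed
    then show "k \<in> lower_positions u i"
      using k assms(1) by (auto simp: lower_positions_def nth_append)
  qed (use assms(1) in \<open>auto simp: lower_positions_def nth_append\<close>)
  then show ?thesis unfolding rank_eq_card_lower_positions by simp
qed

section \<open>Inserting a block of a new largest letter\<close>

definition insert_block :: "nat \<Rightarrow> nat \<Rightarrow> nat list \<Rightarrow> nat \<Rightarrow> nat list" where
  "insert_block a m u p = take p u @ replicate a m @ drop p u"

lemma length_insert_block: "p \<le> length u \<Longrightarrow> length (insert_block a m u p) = length u + a"
  by (simp add: insert_block_def)

lemma nth_insert_block:
  assumes "p \<le> length u" "t < length u + a"
  shows "insert_block a m u p ! t = (if t < p then u ! t else if t < p + a then m else u ! (t - a))"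
  using assms by (auto simp: insert_block_def nth_append min_def)

lemma insert_block_0: "insert_block a m u 0 = replicate a m @ u"
  by (simp add: insert_block_def)

lemma insert_block_length: "insert_block a m u (length u) = u @ replicate a m"
  by (simp add: insert_block_def)

lemma set_insert_block:
  "0 < a \<Longrightarrow> set (insert_block a m u p) = insert m (set u)"
  by (auto simp: insert_block_def dest: in_set_takeD in_set_dropD)
    (metis Un_iff append_take_drop_id set_append)

lemma count_list_insert_block:
  "count_list (insert_block a m u p) v = count_list u v + (if v = m then a else 0)"
proof -
  have "count_list (replicate a m) v = (if v = m then a else 0)" by (induction a) auto
  moreover have "count_list (take p u) v + count_list (drop p u) v = count_list u v"
    by (metis append_take_drop_id count_list_append)
  ultimately show ?thesis by (simp add: insert_block_def)
qed

lemma insert_block_inj: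
  assumes "0 < a" "m \<notin> set u" "m \<notin> set u'" "p \<le> length u" "p' \<le> length u'"
    and "insert_block a m u p = insert_block a m u' p'"
  shows "u = u'" "p = p'"
proof -
  have filter: "filter (\<lambda>y. y \<noteq> m) (insert_block a m x q) = x" if "m \<notin> set x" for x q
  proof -
    have "filter (\<lambda>y. y \<noteq> m) (insert_block a m x q) = filter (\<lambda>y. y \<noteq> m) (take q x @ drop q x)"
      by (simp only: insert_block_def filter_append) simp
    also have "\<dots> = x" using that by (auto simp: filter_id_conv)
    finally show ?thesis .
  qed
  have prefix: "length (takeWhile (\<lambda>y. y \<noteq> m) (insert_block a m x q)) = q"
    if "m \<notin> set x" "q \<le> length x" for x q
  proof -
    have "\<forall>y\<in>set (take q x). y \<noteq> m" using that(1) in_set_takeD by fastforce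
    then have "takeWhile (\<lambda>y. y \<noteq> m) (insert_block a m x q) = take q x"
      using assms(1) by (cases a) (simp_all add: insert_block_def takeWhile_append2)
    then show ?thesis using that(2) by simp
  qed
  show "u = u'" "p = p'"
    using filter[of u p] filter[of u' p'] prefix[of u p] prefix[of u' p'] assms(2-6) by metis+
qed

lemma contains212I:
  assumes "y \<in> set Y" "y < c"
  shows "contains212 (X @ c # Y @ c # Z)"
proof -
  obtain Y1 Y2 where Y: "Y = Y1 @ y # Y2" using split_list[OF assms(1)] by blast
  let ?w = "X @ c # Y @ c # Z"
  have "?w ! length X = c" "?w ! (length X + 1 + length Y1) = y" "?w ! (length X + 1 + length Y) = c"
    unfolding Y by (simp_all add: nth_append)
  then show ?thesis
    unfolding contains212_def using assms(2)
    by (intro exI[of _ "length X"] exI[of _ "length X + 1 + length Y1"] exI[of _ "length X + 1 + length Y"])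
      (simp add: Y)
qed

lemma contains212_insert_block:
  assumes "contains212 u" "p \<le> length u"
  shows "contains212 (insert_block a m u p)"
proof -
  obtain i j k where ijk: "i < j" "j < k" "k < length u" "u ! i = u ! k" "u ! j < u ! k"
    using assms(1) unfolding contains212_def by blast
  define f where "f t = (if t < p then t else t + a)" for t
  have "f i < f j" "f j < f k" "f k < length u + a" using ijk unfolding f_def by auto
  moreover have "insert_block a m u p ! f t = u ! t" if "t < length u" for t
    using that assms(2) unfolding f_def by (auto simp: nth_insert_block)
  ultimately show ?thesis
    unfolding contains212_def using ijk assms(2)
    by (intro exI[of _ "f i"] exI[of _ "f j"] exI[of _ "f k"]) (simp add: length_insert_block)
qed

lemma contains212_insert_blockD:
  assumes lt: "\<forall>y\<in>set u. y < m" and p: "p \<le> length u"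
    and "contains212 (insert_block a m u p)"
  shows "contains212 u"
proof -
  let ?w = "insert_block a m u p"
  let ?out = "\<lambda>t. t < p \<or> p + a \<le> t"
  obtain i j k where ijk: "i < j" "j < k" "k < length u + a" "?w ! i = ?w ! k" "?w ! j < ?w ! k"
    using assms(3) length_insert_block[OF p] unfolding contains212_def by auto
  have nth: "?w ! t = (if t < p then u ! t else if t < p + a then m else u ! (t - a))"
    if "t < length u + a" for t
    using nth_insert_block[OF p that] .
  have less: "?w ! t < m" if "?out t" "t < length u + a" for t
    using nth[OF that(2)] that lt p by auto
  have out: "?out t" if "t < length u + a" "?w ! t < m" for t
    using nth[OF that(1)] that(2) by (auto split: if_splits)
  have "?w ! k < m"
  proof (rule ccontr)
    assume "\<not> ?w ! k < m"
    then have "\<not> ?out i" "\<not> ?out k" using less ijk by (metis less_trans)+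
    then have "?w ! j = m" "?w ! k = m" using nth[of j] nth[of k] ijk by auto
    then show False using ijk by simp
  qed
  then have "?out i" "?out j" "?out k" using out ijk by (metis less_trans)+
  define g where "g t = (if t < p then t else t - a)" for t
  have "g i < g j" "g j < g k" "g k < length u" using ijk \<open>?out i\<close> \<open>?out j\<close> \<open>?out k\<close> p
    unfolding g_def by auto
  moreover have "?w ! t = u ! g t" if "?out t" "t < length u + a" for t
    using that nth[OF that(2)] unfolding g_def by auto
  ultimately show ?thesis
    unfolding contains212_def using ijk \<open>?out i\<close> \<open>?out j\<close> \<open>?out k\<close>
    by (intro exI[of _ "g i"] exI[of _ "g j"] exI[of _ "g k"]) auto
qed

lemma swords_less: "u \<in> swords s \<Longrightarrow> y \<in> set u \<Longrightarrow> y < Suc (length s)"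
  by (auto simp: swords_def)

lemma length_swords: "w \<in> swords s \<Longrightarrow> length w = sum_list s"
proof -
  assume w: "w \<in> swords s"
  have "length w = sum (count_list w) {1..length s}"
    using sum_count_set[of w "{1..length s}"] w unfolding swords_def by auto
  also have "\<dots> = (\<Sum>i<length s. count_list w (Suc i))"
    by (simp add: sum.atLeast1_atMost_eq)
  also have "\<dots> = (\<Sum>i<length s. s ! i)" using w unfolding swords_def by (auto intro: sum.cong)
  also have "\<dots> = sum_list s" by (simp add: sum_list_sum_nth lessThan_atLeast0)
  finally show ?thesis .
qed

lemma swords_snoc:
  "w \<in> swords (s @ [a]) \<longleftrightarrow> set w \<subseteq> {1..Suc (length s)}
     \<and> (\<forall>i<length s. count_list w (i + 1) = s ! i) \<and> count_list w (Suc (length s)) = a"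
  by (auto simp: swords_def nth_append less_Suc_eq)

lemma insert_block_in_swords_iff:
  assumes "0 < a"
  shows "insert_block a (Suc (length s)) u p \<in> swords (s @ [a]) \<longleftrightarrow> u \<in> swords s"
proof -
  have "Suc (length s) \<notin> set u \<and> set u \<subseteq> {1..Suc (length s)} \<longleftrightarrow> set u \<subseteq> {1..length s}"
    by (auto simp: subset_iff le_Suc_eq)
  then show ?thesis
    unfolding swords_snoc using assms
    by (auto simp: swords_def set_insert_block count_list_insert_block count_list_0_iff)
qed

lemma insert_block_in_Av212_iff:
  assumes "0 < a" "p \<le> length u"
  shows "insert_block a (Suc (length s)) u p \<in> Av212 (s @ [a]) \<longleftrightarrow> u \<in> Av212 s"
  using insert_block_in_swords_iff[OF assms(1)] contains212_insert_block[OF _ assms(2)]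
    contains212_insert_blockD[OF _ assms(2)] swords_less
  unfolding Av212_def by blast

lemma not_contains212_max_contiguous:
  assumes "\<not> contains212 w" "\<forall>y\<in>set w. y \<le> c"
  shows "\<exists>A B. w = A @ replicate (count_list w c) c @ B \<and> c \<notin> set A \<and> c \<notin> set B"
proof (cases "c \<in> set w")
  case False
  then show ?thesis by (intro exI[of _ w] exI[of _ "[]"]) simp
next
  case True
  then obtain A R where w: "w = A @ c # R" and A: "c \<notin> set A" using split_list_first by metis
  define B where "B = dropWhile (\<lambda>y. y = c) R"
  define k where "k = length (takeWhile (\<lambda>y. y = c) R)"
  have "takeWhile (\<lambda>y. y = c) R = replicate k c" unfolding k_def by (induction R) auto
  then have R: "R = replicate k c @ B" unfolding B_def by (metis takeWhile_dropWhile_id)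
  have B: "c \<notin> set B"
  proof
    assume "c \<in> set B"
    then obtain y B' where B': "B = y # B'" and "y \<noteq> c" "c \<in> set B'"
      using hd_dropWhile[of "\<lambda>y. y = c" R] unfolding B_def[symmetric]
      by (cases B) auto
    then obtain Y Z where "B' = Y @ c # Z" by (metis split_list)
    moreover have "y < c" using assms(2) \<open>y \<noteq> c\<close> unfolding w R B' by fastforce
    ultimately have "contains212 (A @ c # (replicate k c @ [y] @ Y) @ c # Z)"
      by (intro contains212I) auto
    then show False using assms(1) unfolding w R B' \<open>B' = Y @ c # Z\<close> by simp
  qed
  have "count_list w c = Suc k"
    using A B unfolding w R by (auto simp: count_list_eq_length_filter filter_empty_conv)
  then show ?thesis using A B unfolding w R by (intro exI[of _ A] exI[of _ B]) simp
qed

lemma Av212_snoc_cases: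
  assumes "0 < a" "w \<in> Av212 (s @ [a])"
  obtains u p where "u \<in> Av212 s" "p \<le> length u" "w = insert_block a (Suc (length s)) u p"
proof -
  let ?m = "Suc (length s)"
  have "count_list w ?m = a" "\<forall>y\<in>set w. y \<le> ?m" "\<not> contains212 w"
    using assms(2) by (auto simp: Av212_def swords_snoc)
  then obtain A B where "w = A @ replicate a ?m @ B"
    using not_contains212_max_contiguous by metis
  then have "w = insert_block a ?m (A @ B) (length A)" by (simp add: insert_block_def)
  then show ?thesis
    using that[of "A @ B" "length A"] insert_block_in_Av212_iff[OF assms(1), of "length A" "A @ B" s]
      assms(2)
    by simp
qed

lemma start_word_snoc: "start_word (s @ [a]) = start_word s @ replicate a (Suc (length s))"
proof -
  have "map (\<lambda>i. replicate ((s @ [a]) ! i) (Suc i)) [0..<length s]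
      = map (\<lambda>i. replicate (s ! i) (Suc i)) [0..<length s]"
    by (auto simp: nth_append)
  then show ?thesis unfolding start_word_def by (simp del: map_eq_conv)
qed

lemma bump_block_right_1:
  assumes "\<forall>y\<in>set u. y < m" "p < length u" "0 < a"
  shows "bump (insert_block a m u p) p True 1 = Some (insert_block a m u (Suc p))"
proof -
  have "drop p u = u ! p # drop (Suc p) u" using assms(2) by (simp add: Cons_nth_drop_Suc)
  moreover have "u ! p < m" using assms(1,2) by simp
  ultimately have "bump (take p u @ replicate a m @ drop p u) (length (take p u) + 0) True 1
      = Some (take p u @ [u ! p] @ replicate a m @ drop (Suc p) u)"
    using bump_right_in_block[of 0 a "drop p u" m "take p u" 1] assms(3) by simp
  then show ?thesis
    using assms(2) by (simp add: insert_block_def take_Suc_conv_app_nth)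
qed

lemma bump_block_left_1:
  assumes "\<forall>y\<in>set u. y < m" "0 < p" "p \<le> length u" "0 < a"
  shows "bump (insert_block a m u p) (p + a - 1) False 1 = Some (insert_block a m u (p - 1))"
proof -
  have "u ! (p - 1) < m" using assms(1-3) by simp
  then have neq: "u ! (p - 1) \<noteq> m" by simp
  have "take p u = take (p - 1) u @ [u ! (p - 1)]"
    using assms(2,3) by (metis Suc_diff_1 Suc_le_lessD take_Suc_conv_app_nth)
  then have "bump (take p u @ replicate a m @ drop p u) (length (take p u) + (a - 1)) False 1
      = Some (take (p - 1) u @ replicate a m @ [u ! (p - 1)] @ drop p u)"
    using bump_left_in_block[of "a - 1" a "take p u" m "drop p u" 1] assms neq by simp
  moreover have "[u ! (p - 1)] @ drop p u = drop (p - 1) u"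
    using assms(2,3) by (metis Cons_nth_drop_Suc Suc_diff_1 Suc_le_lessD append_Cons append_Nil)
  ultimately show ?thesis
    using assms(2-4) by (auto simp: insert_block_def)
qed

lemma contains212_split_run:
  assumes "0 < j" "j < k" "y \<in> set Y" "y < c"
  shows "contains212 (X @ replicate j c @ Y @ replicate (k - j) c @ Z)"
proof -
  obtain j' k' where "j = Suc j'" "k - j = Suc k'"
    using assms(1,2) by (metis Suc_diff_Suc gr0_implies_Suc)
  then have "X @ replicate j c @ Y @ replicate (k - j) c @ Z
      = (X @ replicate j' c) @ c # Y @ c # (replicate k' c @ Z)"
    by (simp add: replicate_append_same[symmetric])
  then show ?thesis using contains212I[OF assms(3,4)] by metis
qed

lemma bump_right_from_block:
  assumes "\<forall>y\<in>set u. y < m" "p \<le> length u" "p \<le> t" "t < p + a"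
    and "bump (insert_block a m u p) t True d = Some v" "\<not> contains212 v"
  shows "t = p" "p + d \<le> length u" "v = insert_block a m u (p + d)"
proof -
  let ?A = "take p u" and ?B = "drop p u"
  have "?B = [] \<or> hd ?B \<noteq> m" using assms(1) by (metis hd_in_set in_set_dropD less_irrefl)
  then have "bump (?A @ replicate a m @ ?B) (length ?A + (t - p)) True d =
    (if 1 \<le> d \<and> d \<le> length ?B \<and> (\<forall>x\<in>set (take d ?B). x < m)
     then Some (?A @ replicate (t - p) m @ take d ?B @ replicate (a - (t - p)) m @ drop d ?B) else None)"
    using assms(3,4) by (intro bump_right_in_block) auto
  moreover have "bump (?A @ replicate a m @ ?B) (length ?A + (t - p)) True d = Some v"
    using assms(2-5) by (simp add: insert_block_def)
  ultimately have d: "1 \<le> d" "d \<le> length ?B" "\<forall>x\<in>set (take d ?B). x < m"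
    and v: "v = ?A @ replicate (t - p) m @ take d ?B @ replicate (a - (t - p)) m @ drop d ?B"
    by (metis option.inject option.distinct(1))+
  have "take d ?B \<noteq> []" using d(1,2) by auto
  then have "hd (take d ?B) \<in> set (take d ?B)" by (rule hd_in_set)
  then have "\<not> 0 < t - p"
    using contains212_split_run[of "t - p" a _ _ m ?A "drop d ?B"] assms(4,6) d(3) v by fastforce
  moreover have "take p u @ take d (drop p u) = take (p + d) u" by (simp add: take_add)
  ultimately show "t = p" "p + d \<le> length u" "v = insert_block a m u (p + d)"
    using assms(2,3) d(2) v by (simp_all add: insert_block_def add.commute)
qed

lemma bump_left_from_block:
  assumes "\<forall>y\<in>set u. y < m" "p \<le> length u" "p \<le> t" "t < p + a"
    and "bump (insert_block a m u p) t False d = Some v" "\<not> contains212 v"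
  shows "t = p + a - 1" "d \<le> p" "v = insert_block a m u (p - d)"
proof -
  let ?A = "take p u" and ?B = "drop p u"
  have lA: "length ?A = p" using assms(2) by simp
  have j: "t - p < a" using assms(3,4) by simp
  have "?A = [] \<or> last ?A \<noteq> m" using assms(1) by (metis last_in_set in_set_takeD less_irrefl)
  note bump_left_in_block[OF j this, of ?B d]
  then have "bump (?A @ replicate a m @ ?B) (length ?A + (t - p)) False d =
    (if 1 \<le> d \<and> d \<le> p \<and> (\<forall>x\<in>set (drop (p - d) ?A). x < m)
     then Some (take (p - d) ?A @ replicate (Suc (t - p)) m @ drop (p - d) ?A
                @ replicate (a - Suc (t - p)) m @ ?B)
     else None)"
    unfolding lA .
  moreover have "bump (?A @ replicate a m @ ?B) (length ?A + (t - p)) False d = Some v"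
    using assms(2-5) by (simp add: insert_block_def)
  ultimately have d: "1 \<le> d" "d \<le> p" "\<forall>x\<in>set (drop (p - d) ?A). x < m"
    and v: "v = take (p - d) ?A @ replicate (Suc (t - p)) m @ drop (p - d) ?A
                @ replicate (a - Suc (t - p)) m @ ?B"
    by (metis option.inject option.distinct(1))+
  have "drop (p - d) ?A \<noteq> []" using d(1,2) assms(2) by auto
  then have "hd (drop (p - d) ?A) \<in> set (drop (p - d) ?A)" by (rule hd_in_set)
  then have "\<not> Suc (t - p) < a"
    using contains212_split_run[of "Suc (t - p)" a _ _ m "take (p - d) ?A" ?B] assms(6) d(3) v
    by fastforce
  then have "a = Suc (t - p)" using assms(3,4) by simp
  moreover have "take d (drop (p - d) u) @ drop p u = drop (p - d) u"
  proof -
    have "drop p u = drop d (drop (p - d) u)" using d(2) by simp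
    then show ?thesis by (metis append_take_drop_id)
  qed
  ultimately show "t = p + a - 1" "d \<le> p" "v = insert_block a m u (p - d)"
    using assms(3) d(2) v by (simp_all add: insert_block_def drop_take)
qed

lemma bump_insert_block_at_end:
  assumes "\<forall>y\<in>set u. y < m" "p = 0 \<or> p = length u" "i < length u"
  shows "bump (insert_block a m u p) (if p = 0 then a + i else i) r d
    = map_option (\<lambda>v. insert_block a m v p) (bump u i r d)"
proof -
  have larger: "\<forall>x\<in>set (replicate a m). u ! i < x" using assms(1,3) by simp
  show ?thesis
  proof (cases "p = 0")
    case True
    then show ?thesis
      using bump_larger_prefix[OF assms(3) larger] by (simp add: insert_block_0)
  next
    case False
    then have "p = length u" using assms(2) by simp
    moreover have "insert_block a m v (length u) = v @ replicate a m" if "bump u i r d = Some v" for v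
      using bump_SomeD(1)[OF that] insert_block_length by metis
    ultimately show ?thesis
      using bump_larger_suffix[OF assms(3) larger] False
      by (cases "bump u i r d") (simp_all add: insert_block_length)
  qed
qed

lemma rank_insert_block_at_end:
  assumes "\<forall>y\<in>set u. y < m" "p = 0 \<or> p = length u" "i < length u"
  shows "rank (insert_block a m u p) (if p = 0 then a + i else i) = rank u i"
proof -
  have larger: "\<forall>x\<in>set (replicate a m). u ! i < x" using assms(1,3) by simp
  show ?thesis
    using rank_larger_prefix[OF assms(3) larger] rank_larger_suffix[OF assms(3) larger] assms(2)
    by (auto simp: insert_block_0 insert_block_length)
qed

section \<open>Algorithm B\<close>

definition algB_candidates :: "nat list set \<Rightarrow> nat list list \<Rightarrow> (nat \<times> bool) set" where
  "algB_candidates L vis =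
     {(i, r). i < length (last vis) \<and> (\<exists>v. minbump L (last vis) i r = Some v \<and> v \<notin> set vis)}"

lemma finite_algB_candidates: "finite (algB_candidates L vis)"
proof (rule finite_subset)
  show "algB_candidates L vis \<subseteq> {..<length (last vis)} \<times> UNIV"
    by (auto simp: algB_candidates_def)
qed simp

lemma algB_candidates_max:
  assumes "algB_candidates L vis \<noteq> {}"
  obtains c where "c \<in> algB_candidates L vis"
    "\<forall>c'\<in>algB_candidates L vis. c' \<noteq> c \<longrightarrow> bkey (last vis) c' < bkey (last vis) c"
proof -
  let ?C = "algB_candidates L vis" and ?w = "last vis"
  have fin: "finite (bkey ?w ` ?C)" using finite_algB_candidates by simp
  have "Max (bkey ?w ` ?C) \<in> bkey ?w ` ?C" using Max_in[OF fin] assms by simp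
  then obtain c where c: "c \<in> ?C" "bkey ?w c = Max (bkey ?w ` ?C)" by (metis imageE)
  have "bkey ?w c' < bkey ?w c" if "c' \<in> ?C" "c' \<noteq> c" for c'
  proof -
    have "fst c < length ?w" "fst c' < length ?w"
      using c(1) that(1) by (auto simp: algB_candidates_def)
    then have "bkey ?w c' \<noteq> bkey ?w c" using bkey_inj that(2) by metis
    moreover have "bkey ?w c' \<le> bkey ?w c" using c fin that(1) by simp
    ultimately show ?thesis by simp
  qed
  then show ?thesis using that c(1) by blast
qed

lemma algB_step_candidates:
  "algB_step L vis =
    (if algB_candidates L vis = {} then None
     else minbump L (last vis)
       (fst (THE c. c \<in> algB_candidates L vis
                    \<and> (\<forall>c'\<in>algB_candidates L vis. bkey (last vis) c' \<le> bkey (last vis) c)))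
       (snd (THE c. c \<in> algB_candidates L vis
                    \<and> (\<forall>c'\<in>algB_candidates L vis. bkey (last vis) c' \<le> bkey (last vis) c))))"
  unfolding algB_step_def algB_candidates_def Let_def by simp

lemma algB_step_eq_minbump:
  assumes "c \<in> algB_candidates L vis"
    and "\<forall>c'\<in>algB_candidates L vis. c' \<noteq> c \<longrightarrow> bkey (last vis) c' < bkey (last vis) c"
  shows "algB_step L vis = minbump L (last vis) (fst c) (snd c)"
proof -
  let ?C = "algB_candidates L vis" and ?w = "last vis"
  have "(THE c. c \<in> ?C \<and> (\<forall>c'\<in>?C. bkey ?w c' \<le> bkey ?w c)) = c"
  proof (rule the_equality)
    show "c \<in> ?C \<and> (\<forall>c'\<in>?C. bkey ?w c' \<le> bkey ?w c)"
      using assms by (metis order.order_iff_strict)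
  next
    fix c'' assume "c'' \<in> ?C \<and> (\<forall>c'\<in>?C. bkey ?w c' \<le> bkey ?w c'')"
    then show "c'' = c" using assms by (metis leD)
  qed
  moreover have "?C \<noteq> {}" using assms(1) by blast
  ultimately show ?thesis unfolding algB_step_candidates by simp
qed

lemma algB_step_None_iff: "algB_step L vis = None \<longleftrightarrow> algB_candidates L vis = {}"
proof
  assume step: "algB_step L vis = None"
  show "algB_candidates L vis = {}"
  proof (rule ccontr)
    assume "algB_candidates L vis \<noteq> {}"
    then obtain c where c: "c \<in> algB_candidates L vis"
      "\<forall>c'\<in>algB_candidates L vis. c' \<noteq> c \<longrightarrow> bkey (last vis) c' < bkey (last vis) c"
      by (rule algB_candidates_max)
    then show False
      using step algB_step_eq_minbump[OF c] by (auto simp: algB_candidates_def)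
  qed
qed (simp add: algB_step_candidates)

lemma algB_step_map:
  assumes cands: "algB_candidates L vis = f ` algB_candidates L' vis'"
    and key: "\<And>c. c \<in> algB_candidates L' vis' \<Longrightarrow> bkey (last vis) (f c) = bkey (last vis') c"
    and step: "\<And>c. c \<in> algB_candidates L' vis' \<Longrightarrow>
      minbump L (last vis) (fst (f c)) (snd (f c)) = map_option F (minbump L' (last vis') (fst c) (snd c))"
  shows "algB_step L vis = map_option F (algB_step L' vis')"
proof (cases "algB_candidates L' vis' = {}")
  case True
  then have "algB_step L vis = None" "algB_step L' vis' = None"
    using cands by (simp_all add: algB_step_None_iff)
  then show ?thesis by simp
next
  case False
  then obtain c where c: "c \<in> algB_candidates L' vis'"
    "\<forall>c'\<in>algB_candidates L' vis'. c' \<noteq> c \<longrightarrow> bkey (last vis') c' < bkey (last vis') c"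
    by (rule algB_candidates_max)
  have "\<forall>c'\<in>algB_candidates L vis. c' \<noteq> f c \<longrightarrow> bkey (last vis) c' < bkey (last vis) (f c)"
    unfolding cands using c key by auto
  then have "algB_step L vis = minbump L (last vis) (fst (f c)) (snd (f c))"
    using algB_step_eq_minbump cands c(1) by blast
  also have "\<dots> = map_option F (algB_step L' vis')"
    using step[OF c(1)] algB_step_eq_minbump[OF c] by simp
  finally show ?thesis .
qed

lemma minbump_SomeD:
  assumes "minbump L w i r = Some v"
  obtains d where "bump w i r d = Some v" "v \<in> L"
proof -
  have ex: "\<exists>d. bump_into L w i r d" using assms by (auto simp: minbump_def split: if_splits)
  define d where "d = (LEAST d. bump_into L w i r d)"
  have "bump_into L w i r d" unfolding d_def using ex by (rule LeastI_ex)
  moreover have "minbump L w i r = bump w i r d" unfolding d_def minbump_def using ex by simp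
  ultimately show ?thesis using that assms unfolding bump_into_def by auto
qed

lemma minbump_eq_bump_1:
  assumes "bump w i r 1 = Some v" "v \<in> L"
  shows "minbump L w i r = Some v"
proof -
  have b1: "bump_into L w i r 1" using assms by (auto simp: bump_into_def)
  moreover have "(LEAST d. bump_into L w i r d) = 1"
    using b1 by (rule Least_equality) (auto simp: bump_into_def dest: bump_SomeD(3))
  ultimately show ?thesis using assms(1) by (auto simp: minbump_def)
qed

lemma minbump_map:
  assumes "\<And>d. bump w i' r d = map_option F (bump u i r d)"
    and "\<And>d v. bump u i r d = Some v \<Longrightarrow> F v \<in> L \<longleftrightarrow> v \<in> L'"
  shows "minbump L w i' r = map_option F (minbump L' u i r)"
proof -
  have "bump_into L w i' r = bump_into L' u i r"
  proof
    fix d show "bump_into L w i' r d = bump_into L' u i r d"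
      using assms[of d] by (cases "bump u i r d") (auto simp: bump_into_def)
  qed
  then show ?thesis using assms(1) by (simp add: minbump_def)
qed

definition algB_trace :: "nat list set \<Rightarrow> nat list \<Rightarrow> nat list list \<Rightarrow> bool" where
  "algB_trace L w0 T \<longleftrightarrow> T \<noteq> [] \<and> hd T = w0
     \<and> (\<forall>t. Suc t < length T \<longrightarrow> algB_step L (take (Suc t) T) = Some (T ! Suc t))
     \<and> algB_step L T = None"

lemma algB_run_eq_trace:
  assumes "algB_trace L w0 T"
  shows "algB_run L w0 (length T - 1) = T"
proof -
  have "algB_run L w0 k = take (Suc k) T" if "k < length T" for k
    using that
  proof (induction k)
    case 0
    then show ?case using assms by (cases T) (simp_all add: algB_trace_def)
  next
    case (Suc k)
    then show ?case using assms by (simp add: algB_trace_def take_Suc_conv_app_nth)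
  qed
  then show ?thesis using assms by (simp add: algB_trace_def)
qed

definition bump1_chain :: "nat list list \<Rightarrow> bool" where
  "bump1_chain T \<longleftrightarrow> (\<forall>t. Suc t < length T \<longrightarrow> (\<exists>i r. bump (T ! t) i r 1 = Some (T ! Suc t)))"

text \<open>Block letters have the largest ranks, so a block bump to an unvisited word takes priority
  over all other bumps.\<close>

lemma algB_step_block_move:
  assumes "\<forall>y\<in>set u. y < m" "p \<le> length u" "last vis = insert_block a m u p"
    and "p \<le> ci" "ci < p + a"
    and "minbump L (last vis) ci cr = Some v0" "v0 \<notin> set vis"
    and others: "\<And>i r d v. p \<le> i \<Longrightarrow> i < p + a \<Longrightarrow> (i, r) \<noteq> (ci, cr)
      \<Longrightarrow> bump (last vis) i r d = Some v \<Longrightarrow> v \<in> L \<Longrightarrow> v \<in> set vis"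
  shows "algB_step L vis = Some v0"
proof -
  let ?w = "last vis"
  have len: "length ?w = length u + a" using assms(2,3) by (simp add: length_insert_block)
  have c: "(ci, cr) \<in> algB_candidates L vis"
    using assms(2,4-7) len by (auto simp: algB_candidates_def)
  have "bkey ?w c' < bkey ?w (ci, cr)" if c': "c' \<in> algB_candidates L vis" "c' \<noteq> (ci, cr)" for c'
  proof -
    obtain i r v where i: "c' = (i, r)" "i < length ?w" "minbump L ?w i r = Some v" "v \<notin> set vis"
      using c' by (auto simp: algB_candidates_def)
    obtain d where "bump ?w i r d = Some v" "v \<in> L" using minbump_SomeD[OF i(3)] .
    then have "\<not> (p \<le> i \<and> i < p + a)" using others i(1,4) c'(2) by blast
    then have "?w ! i < ?w ! ci"
      using assms(1-5) i(2) len by (auto simp: nth_insert_block)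
    then have "rank ?w i < rank ?w ci" using i(2) by (intro rank_less) simp_all
    then show ?thesis unfolding i(1) bkey_def by auto
  qed
  then show ?thesis using algB_step_eq_minbump[OF c] assms(6) by auto
qed

section \<open>Extending a trace by one letter\<close>

locale snoc_letter =
  fixes s :: "nat list" and a :: nat
  assumes a_pos: "0 < a"
begin

abbreviation m :: nat where "m \<equiv> Suc (length s)"

abbreviation ins :: "nat list \<Rightarrow> nat \<Rightarrow> nat list" where "ins u p \<equiv> insert_block a m u p"

lemma Av212_less: "u \<in> Av212 s \<Longrightarrow> \<forall>y\<in>set u. y < m"
  by (auto simp: Av212_def dest: swords_less)

lemma ins_in_Av212_iff: "p \<le> length u \<Longrightarrow> ins u p \<in> Av212 (s @ [a]) \<longleftrightarrow> u \<in> Av212 s"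
  by (rule insert_block_in_Av212_iff[OF a_pos])

lemma algB_step_block_left:
  assumes u: "u \<in> Av212 s" and p: "0 < p" "p \<le> length u"
    and last: "last vis = ins u p" and new: "ins u (p - 1) \<notin> set vis"
    and visited: "\<And>q. p \<le> q \<Longrightarrow> q \<le> length u \<Longrightarrow> ins u q \<in> set vis"
  shows "algB_step (Av212 (s @ [a])) vis = Some (ins u (p - 1))"
proof -
  have lt: "\<forall>y\<in>set u. y < m" using Av212_less[OF u] .
  have "bump (ins u p) (p + a - 1) False 1 = Some (ins u (p - 1))"
    using bump_block_left_1[OF lt p a_pos] .
  moreover have "ins u (p - 1) \<in> Av212 (s @ [a])" using ins_in_Av212_iff u p by simp
  ultimately have mb: "minbump (Av212 (s @ [a])) (last vis) (p + a - 1) False = Some (ins u (p - 1))"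
    unfolding last by (rule minbump_eq_bump_1)
  have "v \<in> set vis"
    if i: "p \<le> i" "i < p + a" "(i, r) \<noteq> (p + a - 1, False)"
      and b: "bump (last vis) i r d = Some v" and v: "v \<in> Av212 (s @ [a])" for i r d v
  proof (cases r)
    case True
    have "\<not> contains212 v" using v by (simp add: Av212_def)
    then have "p + d \<le> length u" "v = ins u (p + d)"
      using bump_right_from_block[OF lt p(2) i(1,2)] b True last by auto
    then show ?thesis using visited by simp
  next
    case False
    have "\<not> contains212 v" using v by (simp add: Av212_def)
    then have "i = p + a - 1"
      using bump_left_from_block(1)[OF lt p(2) i(1,2)] b False last by auto
    then show ?thesis using i(3) False by simp
  qed
  moreover have "p \<le> p + a - 1" "p + a - 1 < p + a" using a_pos by simp_all
  ultimately show ?thesis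
    using algB_step_block_move[OF lt p(2) last _ _ mb new] by blast
qed

lemma algB_step_block_right:
  assumes u: "u \<in> Av212 s" and p: "p < length u"
    and last: "last vis = ins u p" and new: "ins u (Suc p) \<notin> set vis"
    and visited: "\<And>q. q \<le> p \<Longrightarrow> ins u q \<in> set vis"
  shows "algB_step (Av212 (s @ [a])) vis = Some (ins u (Suc p))"
proof -
  have lt: "\<forall>y\<in>set u. y < m" using Av212_less[OF u] .
  have "bump (ins u p) p True 1 = Some (ins u (Suc p))"
    using bump_block_right_1[OF lt p a_pos] .
  moreover have "ins u (Suc p) \<in> Av212 (s @ [a])" using ins_in_Av212_iff u p by simp
  ultimately have mb: "minbump (Av212 (s @ [a])) (last vis) p True = Some (ins u (Suc p))"
    unfolding last by (rule minbump_eq_bump_1)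
  have "v \<in> set vis"
    if i: "p \<le> i" "i < p + a" "(i, r) \<noteq> (p, True)"
      and b: "bump (last vis) i r d = Some v" and v: "v \<in> Av212 (s @ [a])" for i r d v
  proof (cases r)
    case True
    have "\<not> contains212 v" using v by (simp add: Av212_def)
    then have "i = p"
      using bump_right_from_block(1)[OF lt _ i(1,2)] p b True last by auto
    then show ?thesis using i(3) True by simp
  next
    case False
    have "\<not> contains212 v" using v by (simp add: Av212_def)
    then have "v = ins u (p - d)"
      using bump_left_from_block(3)[OF lt _ i(1,2)] p b False last by auto
    then show ?thesis using visited by simp
  qed
  moreover have "p < p + a" using a_pos by simp
  ultimately show ?thesis
    using algB_step_block_move[OF lt _ last _ _ mb new] p by auto
qed

lemma minbump_ins_at_end:
  assumes u: "u \<in> Av212 s" and p: "p = 0 \<or> p = length u" and i: "i < length u"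
  shows "minbump (Av212 (s @ [a])) (ins u p) (if p = 0 then a + i else i) r
    = map_option (\<lambda>v. ins v p) (minbump (Av212 s) u i r)"
proof (rule minbump_map)
  show "bump (ins u p) (if p = 0 then a + i else i) r d = map_option (\<lambda>v. ins v p) (bump u i r d)" for d
    using bump_insert_block_at_end[OF Av212_less[OF u] p i] .
next
  fix d v assume "bump u i r d = Some v"
  then have "p \<le> length v" using bump_SomeD(1) p by fastforce
  then show "ins v p \<in> Av212 (s @ [a]) \<longleftrightarrow> v \<in> Av212 s" by (rule ins_in_Av212_iff)
qed

lemma block_not_candidate:
  assumes u: "u \<in> Av212 s" and p: "p \<le> length u" and last: "last vis = ins u p"
    and visited: "\<And>q. q \<le> length u \<Longrightarrow> ins u q \<in> set vis"
    and i: "p \<le> i" "i < p + a"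
  shows "(i, r) \<notin> algB_candidates (Av212 (s @ [a])) vis"
proof
  assume "(i, r) \<in> algB_candidates (Av212 (s @ [a])) vis"
  then obtain v where mb: "minbump (Av212 (s @ [a])) (ins u p) i r = Some v" and new: "v \<notin> set vis"
    using last by (auto simp: algB_candidates_def)
  obtain d where b: "bump (ins u p) i r d = Some v" and "v \<in> Av212 (s @ [a])"
    using minbump_SomeD[OF mb] .
  then have nc: "\<not> contains212 v" by (simp add: Av212_def)
  have "\<exists>q\<le>length u. v = ins u q"
  proof (cases r)
    case True
    then show ?thesis using bump_right_from_block(2,3)[OF Av212_less[OF u] p i _ nc] b by auto
  next
    case False
    then have "v = ins u (p - d)" using bump_left_from_block(3)[OF Av212_less[OF u] p i _ nc] b by simp
    moreover have "p - d \<le> length u" using p by simp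
    ultimately show ?thesis by blast
  qed
  then show False using visited new by blast
qed

lemma algB_candidates_block_at_end:
  assumes u: "u \<in> Av212 s" and p: "p = 0 \<or> p = length u"
    and last: "last vis = ins u p" "last vis' = u"
    and visited_iff: "\<And>v. v \<in> Av212 s \<Longrightarrow> ins v p \<in> set vis \<longleftrightarrow> v \<in> set vis'"
    and block_visited: "\<And>q. q \<le> length u \<Longrightarrow> ins u q \<in> set vis"
  shows "algB_candidates (Av212 (s @ [a])) vis
    = (\<lambda>(i, r). (if p = 0 then a + i else i, r)) ` algB_candidates (Av212 s) vis'"
    (is "?C = ?f ` ?C'")
proof (intro set_eqI iffI)
  have len: "length (ins u p) = length u + a" using p by (auto simp: length_insert_block)
  fix c
  assume "c \<in> ?C"
  then obtain i' r v' where c: "c = (i', r)" "i' < length u + a"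
    and mb: "minbump (Av212 (s @ [a])) (ins u p) i' r = Some v'" and new: "v' \<notin> set vis"
    using last(1) len by (auto simp: algB_candidates_def)
  have "\<not> (p \<le> i' \<and> i' < p + a)"
    using block_not_candidate[OF u _ last(1) block_visited] \<open>c \<in> ?C\<close> c(1) p by auto
  then obtain i where i: "i < length u" "i' = (if p = 0 then a + i else i)"
    using p c(2) by (cases "p = 0") (auto intro: that[of "i' - a"] that[of i'])
  then obtain v where "minbump (Av212 s) u i r = Some v" "v' = ins v p"
    using mb minbump_ins_at_end[OF u p i(1)] by auto
  moreover have "v \<notin> set vis'"
    using calculation new visited_iff minbump_SomeD[OF calculation(1)] by metis
  ultimately have "(i, r) \<in> ?C'" using i(1) last(2) by (auto simp: algB_candidates_def)
  then show "c \<in> ?f ` ?C'" using c(1) i(2) by force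
next
  fix c
  assume "c \<in> ?f ` ?C'"
  then obtain i r v where c: "c = (if p = 0 then a + i else i, r)" "i < length u"
    and mb: "minbump (Av212 s) u i r = Some v" and new: "v \<notin> set vis'"
    using last(2) by (auto simp: algB_candidates_def)
  have "ins v p \<notin> set vis" using new visited_iff minbump_SomeD[OF mb] by metis
  moreover have "minbump (Av212 (s @ [a])) (ins u p) (if p = 0 then a + i else i) r = Some (ins v p)"
    using minbump_ins_at_end[OF u p c(2)] mb by simp
  moreover have "(if p = 0 then a + i else i) < length (ins u p)"
    using c(2) p by (auto simp: length_insert_block)
  ultimately show "c \<in> ?C" using c(1) last(1) by (auto simp: algB_candidates_def)
qed

lemma algB_step_block_at_end:
  assumes u: "u \<in> Av212 s" and p: "p = 0 \<or> p = length u"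
    and last: "last vis = ins u p" "last vis' = u"
    and visited_iff: "\<And>v. v \<in> Av212 s \<Longrightarrow> ins v p \<in> set vis \<longleftrightarrow> v \<in> set vis'"
    and block_visited: "\<And>q. q \<le> length u \<Longrightarrow> ins u q \<in> set vis"
  shows "algB_step (Av212 (s @ [a])) vis = map_option (\<lambda>v. ins v p) (algB_step (Av212 s) vis')"
proof (rule algB_step_map[OF algB_candidates_block_at_end[OF assms]])
  fix c assume "c \<in> algB_candidates (Av212 s) vis'"
  then have i: "fst c < length u" using last(2) by (auto simp: algB_candidates_def)
  show "bkey (last vis) ((\<lambda>(i, r). (if p = 0 then a + i else i, r)) c) = bkey (last vis') c"
    using rank_insert_block_at_end[OF Av212_less[OF u] p i] last
    by (simp add: bkey_def case_prod_beta)
  show "minbump (Av212 (s @ [a])) (last vis) (fst ((\<lambda>(i, r). (if p = 0 then a + i else i, r)) c))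
      (snd ((\<lambda>(i, r). (if p = 0 then a + i else i, r)) c))
    = map_option (\<lambda>v. ins v p) (minbump (Av212 s) (last vis') (fst c) (snd c))"
    using minbump_ins_at_end[OF u p i] last by (simp add: case_prod_beta)
qed

end

locale block_sweep = snoc_letter +
  fixes T :: "nat list list"
  assumes trace: "algB_trace (Av212 s) (start_word s) T"
    and distinct_T: "distinct T" and set_T: "set T = Av212 s" and chain: "bump1_chain T"
begin

abbreviation n :: nat where "n \<equiv> sum_list s"

abbreviation N :: nat where "N \<equiv> Suc n"

text \<open>At time \<open>j * N + q\<close> (with \<open>q \<le> n\<close>) the block sits at position \<open>pos j q\<close> of \<open>T ! j\<close>:
  the sweeps alternate direction, so consecutive sweeps end and start at the same end.\<close>

definition pos :: "nat \<Rightarrow> nat \<Rightarrow> nat" where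
  "pos j q = (if even j then n - q else q)"

definition sweep :: "nat list list" where
  "sweep = map (\<lambda>t. ins (T ! (t div N)) (pos (t div N) (t mod N))) [0..<length T * N]"

lemma T_ne: "T \<noteq> []"
  using trace by (simp add: algB_trace_def)

lemma nth_T_in_Av212: "j < length T \<Longrightarrow> T ! j \<in> Av212 s"
  using set_T nth_mem by blast

lemma length_Av212: "u \<in> Av212 s \<Longrightarrow> length u = n"
  by (simp add: Av212_def length_swords)

lemma pos_le: "q \<le> n \<Longrightarrow> pos j q \<le> n"
  by (simp add: pos_def)

lemma pos_pos: "q \<le> n \<Longrightarrow> pos j (pos j q) = q"
  by (simp add: pos_def)

lemma length_sweep: "length sweep = length T * N"
  by (simp add: sweep_def)

lemma sweep_time_less: "j < length T \<Longrightarrow> q \<le> n \<Longrightarrow> j * N + q < length T * N"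
  by (metis (no_types) add_less_mono1 le_imp_less_Suc less_eq_Suc_le mult_Suc mult_le_mono1
      order_less_le_trans add.commute)

lemma sweep_time_le_iff: "q \<le> n \<Longrightarrow> j' * N + q \<le> j * N + n \<longleftrightarrow> j' \<le> j"
proof
  assume "j' * N + q \<le> j * N + n"
  then have "j' * N < Suc j * N" by simp
  then show "j' \<le> j" by (simp only: mult_less_cancel2) simp
qed (simp add: add_mono)

lemma sweep_time_cases:
  assumes "t < length T * N"
  obtains j q where "j < length T" "q \<le> n" "t = j * N + q"
proof
  show "t div N < length T" using assms by (simp add: less_mult_imp_div_less)
  show "t mod N \<le> n" by (simp add: less_Suc_eq_le)
  show "t = t div N * N + t mod N" by (rule div_mult_mod_eq[symmetric])
qed

lemma nth_sweep_time:
  assumes "j < length T" "q \<le> n"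
  shows "sweep ! (j * N + q) = ins (T ! j) (pos j q)"
proof -
  have div_mod: "(j * K + x) div K = j \<and> (j * K + x) mod K = x" if "x < K" for K x :: nat
    using that by simp
  have "q < N" using assms(2) by simp
  then have "(j * N + q) div N = j \<and> (j * N + q) mod N = q" by (rule div_mod)
  moreover have "sweep ! (j * N + q) = ins (T ! ((j * N + q) div N)) (pos ((j * N + q) div N) ((j * N + q) mod N))"
    using sweep_time_less[OF assms] by (simp add: sweep_def)
  ultimately show ?thesis by simp
qed

lemma nth_sweep_at: "j < length T \<Longrightarrow> q \<le> n \<Longrightarrow> sweep ! (j * N + pos j q) = ins (T ! j) q"
  using nth_sweep_time[of j "pos j q"] pos_le pos_pos by simp

lemma ins_eq_iff:
  assumes "u \<in> Av212 s" "u' \<in> Av212 s" "q \<le> n" "q' \<le> n"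
  shows "ins u q = ins u' q' \<longleftrightarrow> u = u' \<and> q = q'"
  using insert_block_inj[OF a_pos, of m u u' q q'] assms Av212_less length_Av212 by auto

lemma distinct_sweep: "distinct sweep"
  unfolding distinct_conv_nth length_sweep
proof (intro allI impI)
  fix t t' assume t: "t < length T * N" "t' < length T * N" "t \<noteq> t'"
  obtain j q where j: "j < length T" "q \<le> n" "t = j * N + q"
    using sweep_time_cases[OF t(1)] .
  obtain j' q' where j': "j' < length T" "q' \<le> n" "t' = j' * N + q'"
    using sweep_time_cases[OF t(2)] .
  show "sweep ! t \<noteq> sweep ! t'"
  proof
    assume "sweep ! t = sweep ! t'"
    then have "ins (T ! j) (pos j q) = ins (T ! j') (pos j' q')" using j j' nth_sweep_time by simp
    then have "T ! j = T ! j'" "pos j q = pos j' q'"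
      using ins_eq_iff nth_T_in_Av212 j j' pos_le by blast+
    moreover from this(1) have "j = j'" using j(1) j'(1) distinct_T by (simp add: nth_eq_iff_index_eq)
    ultimately have "q = q'" using pos_pos j(2) j'(2) by metis
    then show False using \<open>j = j'\<close> j j' t(3) by simp
  qed
qed

lemma set_sweep: "set sweep = Av212 (s @ [a])"
proof
  show "set sweep \<subseteq> Av212 (s @ [a])"
  proof
    fix w assume "w \<in> set sweep"
    then obtain t where t: "t < length T * N" "w = sweep ! t"
      by (auto simp: in_set_conv_nth length_sweep)
    obtain j q where j: "j < length T" "q \<le> n" "t = j * N + q"
      using sweep_time_cases[OF t(1)] .
    then have "w = ins (T ! j) (pos j q)" using t(2) nth_sweep_time by simp
    moreover have "T ! j \<in> Av212 s" using nth_T_in_Av212[OF j(1)] .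
    moreover have "pos j q \<le> length (T ! j)" using length_Av212[OF calculation(2)] pos_le j(2) by simp
    ultimately show "w \<in> Av212 (s @ [a])" using ins_in_Av212_iff by blast
  qed
next
  show "Av212 (s @ [a]) \<subseteq> set sweep"
  proof
    fix w assume "w \<in> Av212 (s @ [a])"
    then obtain u p where u: "u \<in> Av212 s" "p \<le> length u" "w = ins u p"
      using Av212_snoc_cases[OF a_pos] by blast
    then obtain j where j: "j < length T" "u = T ! j" using set_T by (metis in_set_conv_nth)
    have p: "p \<le> n" using u length_Av212 by simp
    have "j * N + pos j p < length sweep"
      using sweep_time_less[OF j(1) pos_le[OF p]] by (simp add: length_sweep)
    moreover have "sweep ! (j * N + pos j p) = w" using nth_sweep_at[OF j(1) p] j u(3) by simp
    ultimately show "w \<in> set sweep" by (metis nth_mem)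
  qed
qed

lemma hd_sweep: "hd sweep = start_word (s @ [a])"
proof -
  have "sweep \<noteq> []" using T_ne by (simp add: sweep_def)
  then have "hd sweep = ins (T ! 0) n"
    using nth_sweep_at[of 0 n] T_ne by (simp add: hd_conv_nth pos_def)
  also have "\<dots> = start_word s @ replicate a m"
  proof -
    have "T ! 0 = start_word s" using trace T_ne by (simp add: algB_trace_def hd_conv_nth)
    moreover have "length (T ! 0) = n" using length_Av212 nth_T_in_Av212 T_ne by simp
    ultimately show ?thesis using insert_block_length by metis
  qed
  finally show ?thesis by (simp add: start_word_snoc)
qed

lemma ins_mem_take_sweep_iff:
  assumes t: "t < length T * N" and v: "v \<in> Av212 s" and q: "q \<le> n"
  shows "ins v q \<in> set (take (Suc t) sweep) \<longleftrightarrow> (\<exists>j<length T. v = T ! j \<and> j * N + pos j q \<le> t)"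
proof
  assume "ins v q \<in> set (take (Suc t) sweep)"
  then obtain t' where "t' < length (take (Suc t) sweep)" "take (Suc t) sweep ! t' = ins v q"
    by (metis in_set_conv_nth)
  then have t': "t' \<le> t" "ins v q = sweep ! t'" by simp_all
  then have "t' < length T * N" using t by simp
  then obtain j q' where j: "j < length T" "q' \<le> n" "t' = j * N + q'"
    by (rule sweep_time_cases)
  then have "ins v q = ins (T ! j) (pos j q')" using t'(2) nth_sweep_time by simp
  then have "v = T ! j \<and> q = pos j q'" using ins_eq_iff v q nth_T_in_Av212 j(1,2) pos_le by blast
  then show "\<exists>j<length T. v = T ! j \<and> j * N + pos j q \<le> t" using j t'(1) pos_pos by auto
next
  assume "\<exists>j<length T. v = T ! j \<and> j * N + pos j q \<le> t"
  then obtain j where j: "j < length T" "v = T ! j" "j * N + pos j q \<le> t" by blast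
  then have "take (Suc t) sweep ! (j * N + pos j q) = ins v q" using nth_sweep_at[of j q] q by simp
  moreover have "j * N + pos j q < length (take (Suc t) sweep)" using j(3) t by (simp add: length_sweep)
  ultimately show "ins v q \<in> set (take (Suc t) sweep)" by (metis nth_mem)
qed

lemma last_take_sweep: "t < length sweep \<Longrightarrow> last (take (Suc t) sweep) = sweep ! t"
  by (simp add: take_Suc_conv_app_nth)

lemma nth_sweep_notin_take: "t < length sweep \<Longrightarrow> sweep ! t \<notin> set (take t sweep)"
  using nth_eq_iff_index_eq[OF distinct_sweep] by (fastforce simp: in_set_conv_nth)

lemma sweep_step_within:
  assumes j: "j < length T" and q: "q < n"
  shows "algB_step (Av212 (s @ [a])) (take (Suc (j * N + q)) sweep) = Some (sweep ! Suc (j * N + q))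
    \<and> (\<exists>i r. bump (sweep ! (j * N + q)) i r 1 = Some (sweep ! Suc (j * N + q)))"
proof -
  let ?t = "j * N + q" and ?u = "T ! j"
  have u: "?u \<in> Av212 s" and len: "length ?u = n" using nth_T_in_Av212[OF j] length_Av212 by auto
  have t: "Suc ?t < length sweep" using sweep_time_less[OF j, of "Suc q"] q by (simp add: length_sweep)
  have cur: "sweep ! ?t = ins ?u (pos j q)" using nth_sweep_time[OF j] q by simp
  have nxt: "sweep ! Suc ?t = ins ?u (pos j (Suc q))" using nth_sweep_time[OF j, of "Suc q"] q by simp
  have last: "last (take (Suc ?t) sweep) = ins ?u (pos j q)" using last_take_sweep t cur by simp
  have new: "ins ?u (pos j (Suc q)) \<notin> set (take (Suc ?t) sweep)"
    using nth_sweep_notin_take[OF t] nxt by simp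
  have visited: "ins ?u q' \<in> set (take (Suc ?t) sweep)" if "q' \<le> n" "pos j q' \<le> q" for q'
    using ins_mem_take_sweep_iff[OF _ u that(1)] t j that(2) by (auto simp: length_sweep)
  show ?thesis
  proof (cases "even j")
    case True
    then have p: "pos j q = Suc (pos j (Suc q))" using q by (simp add: pos_def)
    have step: "algB_step (Av212 (s @ [a])) (take (Suc ?t) sweep) = Some (ins ?u (pos j (Suc q)))"
      using algB_step_block_left[OF u _ _ last, unfolded p] new visited True len q
      by (simp add: pos_def)
    have range: "0 < pos j q" "pos j q \<le> length ?u" using p len pos_le[of q j] q by simp_all
    have "bump (ins ?u (pos j q)) (pos j q + a - 1) False 1 = Some (ins ?u (pos j (Suc q)))"
      using bump_block_left_1[OF Av212_less[OF u] range a_pos] p by simp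
    with step show ?thesis using cur nxt by auto
  next
    case False
    then have p: "pos j (Suc q) = Suc (pos j q)" by (simp add: pos_def)
    have step: "algB_step (Av212 (s @ [a])) (take (Suc ?t) sweep) = Some (ins ?u (pos j (Suc q)))"
      using algB_step_block_right[OF u _ last] new visited False len q p
      by (simp add: pos_def)
    have range: "pos j q < length ?u" using len q False by (simp add: pos_def)
    have "bump (ins ?u (pos j q)) (pos j q) True 1 = Some (ins ?u (pos j (Suc q)))"
      using bump_block_right_1[OF Av212_less[OF u] range a_pos] p by simp
    with step show ?thesis using cur nxt by auto
  qed
qed

lemma sweep_step_across:
  assumes j: "j < length T"
  shows "algB_step (Av212 (s @ [a])) (take (Suc (j * N + n)) sweep)
    = map_option (\<lambda>v. ins v (pos j n)) (algB_step (Av212 s) (take (Suc j) T))"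
proof (rule algB_step_block_at_end)
  let ?vis = "take (Suc (j * N + n)) sweep"
  have t: "j * N + n < length T * N" using sweep_time_less[OF j] by simp
  show u: "T ! j \<in> Av212 s" using nth_T_in_Av212[OF j] .
  show "pos j n = 0 \<or> pos j n = length (T ! j)" using length_Av212[OF u] by (simp add: pos_def)
  show "last ?vis = ins (T ! j) (pos j n)"
    using last_take_sweep[of "j * N + n"] nth_sweep_time[OF j] t by (simp add: length_sweep)
  show "last (take (Suc j) T) = T ! j" using j by (simp add: take_Suc_conv_app_nth)
  show "ins v (pos j n) \<in> set ?vis \<longleftrightarrow> v \<in> set (take (Suc j) T)" if "v \<in> Av212 s" for v
  proof -
    have "ins v (pos j n) \<in> set ?vis \<longleftrightarrow> (\<exists>j'<length T. v = T ! j' \<and> j' \<le> j)"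
      using ins_mem_take_sweep_iff[OF t that] sweep_time_le_iff pos_le pos_pos by simp
    also have "\<dots> \<longleftrightarrow> (\<exists>j'<Suc j. v = T ! j')" using j by (metis le_less_trans less_Suc_eq_le)
    also have "\<dots> \<longleftrightarrow> v \<in> set (take (Suc j) T)" using j by (force simp: in_set_conv_nth)
    finally show ?thesis .
  qed
  show "ins (T ! j) q \<in> set ?vis" if "q \<le> length (T ! j)" for q
    using ins_mem_take_sweep_iff[OF t u] that j length_Av212[OF u] sweep_time_le_iff pos_le by auto
qed

lemma sweep_step:
  assumes "Suc t < length sweep"
  shows "algB_step (Av212 (s @ [a])) (take (Suc t) sweep) = Some (sweep ! Suc t)
    \<and> (\<exists>i r. bump (sweep ! t) i r 1 = Some (sweep ! Suc t))"
proof -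
  have "t < length T * N" using assms unfolding length_sweep by linarith
  then obtain j q where j: "j < length T" "q \<le> n" "t = j * N + q"
    by (rule sweep_time_cases)
  show ?thesis
  proof (cases "q < n")
    case True
    then show ?thesis using sweep_step_within j by simp
  next
    case False
    then have t: "t = j * N + n" and Suc_t: "Suc t = Suc j * N + 0" using j by simp_all
    have "Suc j * N < length T * N" using assms Suc_t by (simp only: length_sweep add_0_right)
    then have j1: "Suc j < length T" by (simp only: mult_less_cancel2)
    have cur: "sweep ! t = ins (T ! j) (pos j n)" using nth_sweep_time[OF j(1)] t by simp
    have nxt: "sweep ! Suc t = ins (T ! Suc j) (pos j n)"
      using nth_sweep_time[OF j1, of 0] Suc_t by (simp add: pos_def)
    have "algB_step (Av212 s) (take (Suc j) T) = Some (T ! Suc j)"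
      using trace j1 by (simp add: algB_trace_def)
    then have "algB_step (Av212 (s @ [a])) (take (Suc t) sweep) = Some (sweep ! Suc t)"
      using sweep_step_across[OF j(1)] t nxt by simp
    moreover obtain i r where b: "bump (T ! j) i r 1 = Some (T ! Suc j)"
      using chain j1 by (auto simp: bump1_chain_def)
    have u: "T ! j \<in> Av212 s" using nth_T_in_Av212[OF j(1)] .
    have "pos j n = 0 \<or> pos j n = length (T ! j)" using length_Av212[OF u] by (simp add: pos_def)
    then have "bump (sweep ! t) (if pos j n = 0 then a + i else i) r 1 = Some (sweep ! Suc t)"
      using bump_insert_block_at_end[OF Av212_less[OF u] _ bump_SomeD(2)[OF b]] b cur nxt by simp
    ultimately show ?thesis by blast
  qed
qed

lemma sweep_halts: "algB_step (Av212 (s @ [a])) sweep = None"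
proof -
  let ?j = "length T - 1"
  have j: "?j < length T" using T_ne by simp
  have "Suc (?j * N + n) = Suc ?j * N" by simp
  also have "\<dots> = length sweep" using T_ne by (simp add: length_sweep)
  finally have "Suc (?j * N + n) = length sweep" .
  then have "algB_step (Av212 (s @ [a])) sweep
      = map_option (\<lambda>v. ins v (pos ?j n)) (algB_step (Av212 s) (take (Suc ?j) T))"
    using sweep_step_across[OF j] by simp
  also have "take (Suc ?j) T = T" using T_ne by simp
  finally show ?thesis using trace by (simp add: algB_trace_def)
qed

lemma sweep_trace: "algB_trace (Av212 (s @ [a])) (start_word (s @ [a])) sweep"
  and bump1_chain_sweep: "bump1_chain sweep"
  using sweep_step sweep_halts hd_sweep T_ne
  by (auto simp: algB_trace_def bump1_chain_def sweep_def)

end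

lemma Av212_algB_trace:
  assumes "\<forall>x\<in>set s. 0 < x"
  shows "\<exists>T. algB_trace (Av212 s) (start_word s) T \<and> distinct T \<and> set T = Av212 s \<and> bump1_chain T"
  using assms
proof (induction s rule: rev_induct)
  case Nil
  have "Av212 [] = {[]}" by (auto simp: Av212_def swords_def contains212_def)
  moreover have "algB_step (Av212 []) [[]] = None"
    by (simp add: algB_step_None_iff algB_candidates_def)
  ultimately show ?case
    by (intro exI[of _ "[[]]"]) (simp add: algB_trace_def bump1_chain_def start_word_def)
next
  case (snoc a s)
  then obtain T where "algB_trace (Av212 s) (start_word s) T" "distinct T" "set T = Av212 s" "bump1_chain T"
    by auto
  moreover have "0 < a" using snoc.prems by simp
  ultimately interpret block_sweep s a T by unfold_locales
  show ?case using sweep_trace bump1_chain_sweep distinct_sweep set_sweep by blast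
qed

theorem mainTheorem3:
  fixes s :: "nat list"
  assumes "\<forall>x\<in>set s. 0 < x"
  shows "\<exists>k. algB_step (Av212 s) (algB_run (Av212 s) (start_word s) k) = None
           \<and> distinct (algB_run (Av212 s) (start_word s) k)
           \<and> set (algB_run (Av212 s) (start_word s) k) = Av212 s
           \<and> (\<forall>j. Suc j < length (algB_run (Av212 s) (start_word s) k) \<longrightarrow>
                (\<exists>i r. bump (algB_run (Av212 s) (start_word s) k ! j) i r 1
                        = Some (algB_run (Av212 s) (start_word s) k ! Suc j)))"
proof -
  obtain T where T: "algB_trace (Av212 s) (start_word s) T" "distinct T" "set T = Av212 s"
    "bump1_chain T"
    using Av212_algB_trace[OF assms] by blast
  have "algB_run (Av212 s) (start_word s) (length T - 1) = T" using algB_run_eq_trace[OF T(1)] .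
  then show ?thesis
    using T by (intro exI[of _ "length T - 1"]) (simp add: algB_trace_def bump1_chain_def)
qed

end
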